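(* Let $(C,D)$ define an irreducible MSPP of order $p$ (a MAP with $C$ diagonal). Then $T_1^{\pi}\ge_{\mathrm{st}} T_1^{\alpha}$, i.e. $$\boldsymbol{\pi}e^{Ct}\mathbf{1}\ \ge\ \boldsymbol{\alpha}e^{Ct}\mathbf{1}\qquad\text{for all } t\ge 0.$$
   Context: A Markovian arrival process (MAP) of order $p$ is specified by $p\times p$ real matrices $C$ and $D$ such that $D$ has nonnegative entries, $C$ has nonnegative off-diagonal entries, and $Q=C+D$ is the generator (row sums zero) of an irreducible continuous-time Markov chain on $\{1,\dots,p\}$; $C$ is assumed nonsingular. An MSPP is a MAP with $C$ diagonal. $\mathbf{1}$ is the all-ones column vector. $\boldsymbol{\pi}$ is the stationary distribution of $Q$ ($\boldsymbol{\pi}Q=\mathbf{0}$, $\boldsymbol{\pi}\mathbf{1}=1$), and $\boldsymbol{\alpha}$ is the stationary distribution of $P=(-C)^{-1}D$ ($\boldsymbol{\alpha}P=\boldsymbol{\alpha}$, $\boldsymbol{\alpha}\mathbf{1}=1$). $T_1^{\boldsymbol{\eta}}$ denotes the time of the first event when the initial phase has distribution $\boldsymbol{\eta}$; $\mathbb{P}(T_1^{\boldsymbol{\eta}}>t)=\boldsymbol{\eta}e^{Ct}\mathbf{1}$. $X\ge_{\mathrm{st}}Y$ means $\mathbb{P}(X>t)\ge\mathbb{P}(Y>t)$ for all $t$. *)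

theory Defs
  imports "HOL-Analysis.Analysis"
begin

primrec mpow :: "real^'n^'n \<Rightarrow> nat \<Rightarrow> real^'n^'n" where
  "mpow A 0 = mat 1"
| "mpow A (Suc k) = A ** mpow A k"

definition mexp :: "real^'n^'n \<Rightarrow> real^'n^'n" where
  "mexp A = (\<chi> i j. (\<Sum>k. (mpow A k) $ i $ j / fact k))"

definition is_generator :: "real^'n^'n \<Rightarrow> bool" where
  "is_generator Q \<longleftrightarrow> (\<forall>i j. i \<noteq> j \<longrightarrow> Q $ i $ j \<ge> 0) \<and> (\<forall>i. (\<Sum>j\<in>UNIV. Q $ i $ j) = 0)"

definition irreducible_gen :: "real^'n^'n \<Rightarrow> bool" where
  "irreducible_gen Q \<longleftrightarrow> (\<forall>i j. (i, j) \<in> {(k, l). k \<noteq> l \<and> Q $ k $ l > 0}\<^sup>*)"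

definition is_MAP :: "real^'n^'n \<Rightarrow> real^'n^'n \<Rightarrow> bool" where
  "is_MAP C D \<longleftrightarrow> (\<forall>i j. D $ i $ j \<ge> 0) \<and> (\<forall>i j. i \<noteq> j \<longrightarrow> C $ i $ j \<ge> 0)
     \<and> is_generator (C + D) \<and> irreducible_gen (C + D) \<and> invertible C"

definition is_MSPP :: "real^'n^'n \<Rightarrow> real^'n^'n \<Rightarrow> bool" where
  "is_MSPP C D \<longleftrightarrow> is_MAP C D \<and> (\<forall>i j. i \<noteq> j \<longrightarrow> C $ i $ j = 0)"

definition is_distribution :: "real^'n \<Rightarrow> bool" where
  "is_distribution v \<longleftrightarrow> (\<forall>i. v $ i \<ge> 0) \<and> (\<Sum>i\<in>UNIV. v $ i) = 1"

end

theory Submission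
  imports Defs
begin

text \<open>For an MSPP write \<open>C = - diag \<lambda>\<close> with \<open>\<lambda> > 0\<close>. Then \<open>\<pi> (C + D) = 0\<close> says
  \<open>\<pi> D = \<pi> diag \<lambda>\<close>, and \<open>\<alpha> = \<alpha> diag(\<lambda>)\<^sup>-\<^sup>1 D\<close> says that \<open>\<beta> = \<alpha> diag(\<lambda>)\<^sup>-\<^sup>1\<close> solves the
  same equation. Since \<open>D\<close> is irreducible, nonnegative solutions of \<open>x D = x diag \<lambda>\<close> are unique
  up to scaling, so \<open>\<alpha>\<^sub>i\<close> is proportional to \<open>\<pi>\<^sub>i \<lambda>\<^sub>i\<close>. As \<open>exp (C t)\<close> is diagonal, the claim becomes
  \<open>\<Sum>\<^sub>i \<pi>\<^sub>i \<lambda>\<^sub>i exp (- \<lambda>\<^sub>i t) \<le> (\<Sum>\<^sub>i \<pi>\<^sub>i \<lambda>\<^sub>i) (\<Sum>\<^sub>i \<pi>\<^sub>i exp (- \<lambda>\<^sub>i t))\<close>, which is Chebyshev's sum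
  inequality for the oppositely ordered sequences \<open>\<lambda>\<^sub>i\<close> and \<open>exp (- \<lambda>\<^sub>i t)\<close> under the
  probability weights \<open>\<pi>\<close>.\<close>

lemma weighted_Chebyshev_sum_upper:
  fixes p l f :: "'a \<Rightarrow> real"
  assumes "finite S" and p_nonneg: "\<And>i. i \<in> S \<Longrightarrow> p i \<ge> 0" and p_sum: "sum p S = 1"
    and antimono: "\<And>i j. i \<in> S \<Longrightarrow> j \<in> S \<Longrightarrow> l i \<le> l j \<Longrightarrow> f j \<le> f i"
  shows "(\<Sum>i\<in>S. p i * l i * f i) \<le> (\<Sum>i\<in>S. p i * l i) * (\<Sum>i\<in>S. p i * f i)"
proof -
  let ?Q = "\<lambda>i j. p i * p j * ((l i - l j) * (f i - f j))"
  have nonpos: "(\<Sum>i\<in>S. \<Sum>j\<in>S. ?Q i j) \<le> 0"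
  proof (intro sum_nonpos)
    fix i j assume "i \<in> S" "j \<in> S"
    then have "(l i - l j) * (f i - f j) \<le> 0"
      using antimono[of i j] antimono[of j i] by (cases "l i \<le> l j") (auto simp: mult_le_0_iff)
    moreover have "p i * p j \<ge> 0" using p_nonneg \<open>i \<in> S\<close> \<open>j \<in> S\<close> by simp
    ultimately show "?Q i j \<le> 0" by (simp add: mult_nonneg_nonpos)
  qed
  have "(\<Sum>i\<in>S. \<Sum>j\<in>S. ?Q i j)
      = (\<Sum>i\<in>S. \<Sum>j\<in>S. (p j * (p i * l i * f i) + p i * (p j * l j * f j))
            - ((p i * l i) * (p j * f j) + (p j * l j) * (p i * f i)))"
    by (intro sum.cong refl) (simp add: algebra_simps)
  also have "\<dots> = 2 * (\<Sum>i\<in>S. p i * l i * f i) - 2 * ((\<Sum>i\<in>S. p i * l i) * (\<Sum>i\<in>S. p i * f i))"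
    by (simp add: sum_subtractf sum.distrib sum_distrib_left[symmetric]
        sum_distrib_right[symmetric] p_sum sum.swap[of "\<lambda>i j. p i * l i * (p j * f j)"])
  finally show ?thesis using nonpos by simp
qed

lemma irreducible_balance_pos:
  fixes D :: "real^'n^'n" and x :: "real^'n" and r :: "'n \<Rightarrow> real"
  assumes D_nonneg: "\<And>i j. D$i$j \<ge> 0" and "irreducible_gen D"
    and x_nonneg: "\<And>i. x$i \<ge> 0" and "x \<noteq> 0"
    and balance: "\<And>j. (\<Sum>i\<in>UNIV. x$i * D$i$j) = x$j * r j"
    and r_pos: "\<And>j. r j > 0"
  shows "x$j > 0"
proof -
  obtain k where "x$k \<noteq> 0" using \<open>x \<noteq> 0\<close> by (metis vec_eq_iff zero_index)
  with x_nonneg have "x$k > 0" by (simp add: order_less_le)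
  have "(k, j) \<in> {(k, l). k \<noteq> l \<and> D$k$l > 0}\<^sup>*"
    using \<open>irreducible_gen D\<close> by (simp add: irreducible_gen_def)
  then show ?thesis
  proof (induction rule: rtrancl_induct)
    case base
    show ?case by fact
  next
    case (step y z)
    have "0 < x$y * D$y$z" using step by simp
    also have "\<dots> \<le> (\<Sum>i\<in>UNIV. x$i * D$i$z)"
      by (rule member_le_sum) (auto simp: x_nonneg D_nonneg)
    finally show ?case using balance[of z] r_pos[of z] by (simp add: zero_less_mult_iff)
  qed
qed

lemma irreducible_balance_unique:
  fixes D :: "real^'n^'n" and x y :: "real^'n" and r :: "'n \<Rightarrow> real"
  assumes D_nonneg: "\<And>i j. D$i$j \<ge> 0" and irr: "irreducible_gen D"
    and x_nonneg: "\<And>i. x$i \<ge> 0" and "x \<noteq> 0"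
    and y_nonneg: "\<And>i. y$i \<ge> 0" and "y \<noteq> 0"
    and balance_x: "\<And>j. (\<Sum>i\<in>UNIV. x$i * D$i$j) = x$j * r j"
    and balance_y: "\<And>j. (\<Sum>i\<in>UNIV. y$i * D$i$j) = y$j * r j"
    and r_pos: "\<And>j. r j > 0"
  shows "\<exists>c. x = c *s y"
proof -
  have y_pos: "y$i > 0" for i
    using irreducible_balance_pos[OF D_nonneg irr y_nonneg \<open>y \<noteq> 0\<close> balance_y r_pos] .
  text \<open>Subtracting the largest multiple of \<open>y\<close> that stays below \<open>x\<close> leaves a nonnegative solution
    with a zero entry, which by positivity must vanish.\<close>
  define c where "c = Min (range (\<lambda>i. x$i / y$i))"
  have "c \<in> range (\<lambda>i. x$i / y$i)" unfolding c_def by (rule Min_in) auto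
  then obtain k where c_k: "c = x$k / y$k" by blast
  have c_le: "c \<le> x$i / y$i" for i unfolding c_def by (rule Min_le) auto
  define z where "z = x - c *s y"
  have z_nonneg: "z$i \<ge> 0" for i
    using c_le[of i] y_pos[of i] by (simp add: z_def pos_le_divide_eq mult.commute)
  have balance_z: "(\<Sum>i\<in>UNIV. z$i * D$i$j) = z$j * r j" for j
  proof -
    have "(\<Sum>i\<in>UNIV. z$i * D$i$j) = (\<Sum>i\<in>UNIV. x$i * D$i$j) - c * (\<Sum>i\<in>UNIV. y$i * D$i$j)"
      by (simp add: z_def algebra_simps sum_subtractf sum_distrib_left)
    then show ?thesis by (simp add: balance_x balance_y z_def algebra_simps)
  qed
  have "\<not> z$k > 0" using c_k y_pos[of k] by (simp add: z_def)
  then have "z = 0"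
    using irreducible_balance_pos[OF D_nonneg irr z_nonneg _ balance_z r_pos] by blast
  then show ?thesis by (auto simp: z_def)
qed

lemma vector_matrix_mult_diagonal:
  fixes A :: "real^'n^'n"
  assumes "\<And>i j. i \<noteq> j \<Longrightarrow> A$i$j = 0"
  shows "(v v* A)$j = v$j * A$j$j"
proof -
  have "(v v* A)$j = (\<Sum>i\<in>UNIV. if i = j then v$j * A$j$j else 0)"
    unfolding vector_matrix_mult_def vec_lambda_beta by (intro sum.cong) (auto simp: assms)
  then show ?thesis by simp
qed

lemma row_sum_diagonal:
  fixes A :: "real^'n^'n"
  assumes "\<And>i j. i \<noteq> j \<Longrightarrow> A$i$j = 0"
  shows "(\<Sum>j\<in>UNIV. A$i$j) = A$i$i"
proof -
  have "(\<Sum>j\<in>UNIV. A$i$j) = (\<Sum>j\<in>UNIV. if j = i then A$i$i else 0)"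
    by (intro sum.cong) (auto simp: assms)
  then show ?thesis by simp
qed

lemma invertible_diagonal_nonzero:
  fixes A :: "'a::semiring_1^'n^'n"
  assumes "\<And>i j. i \<noteq> j \<Longrightarrow> A$i$j = 0" and "invertible A"
  shows "A$i$i \<noteq> 0"
proof
  assume "A$i$i = 0"
  obtain B where "A ** B = mat 1" using \<open>invertible A\<close> invertible_def by blast
  then have "1 = (A ** B)$i$i" by (simp add: mat_def)
  also have "\<dots> = (\<Sum>k\<in>UNIV. A$i$k * B$k$i)" by (simp add: matrix_matrix_mult_def)
  also have "\<dots> = 0" using \<open>A$i$i = 0\<close> assms(1) by (intro sum.neutral) (metis mult_zero_left)
  finally show False by simp
qed

lemma mpow_diagonal:
  fixes A :: "real^'n^'n"
  assumes "\<And>i j. i \<noteq> j \<Longrightarrow> A$i$j = 0"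
  shows "mpow A k = (\<chi> i j. if i = j then (A$i$i)^k else 0)"
proof (induction k)
  case 0 then show ?case by (simp add: mat_def vec_eq_iff)
next
  case (Suc k)
  have "(A ** mpow A k)$i$j = (if i = j then (A$i$i)^Suc k else 0)" for i j
  proof -
    have "(A ** mpow A k)$i$j = (\<Sum>l\<in>UNIV. if l = j then A$i$j * (A$j$j)^k else 0)"
      unfolding matrix_matrix_mult_def Suc vec_lambda_beta by (intro sum.cong) auto
    then show ?thesis using assms[of i j] by simp
  qed
  then show ?case by (simp add: vec_eq_iff)
qed

lemma mexp_diagonal:
  fixes A :: "real^'n^'n"
  assumes "\<And>i j. i \<noteq> j \<Longrightarrow> A$i$j = 0"
  shows "mexp A $ i $ j = (if i = j then exp (A$i$i) else 0)"
proof (cases "i = j")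
  case True
  have "(\<lambda>k. (A$i$i)^k / fact k) sums exp (A$i$i)"
    using exp_converges[of "A$i$i"] by (simp add: divide_inverse mult.commute)
  then show ?thesis using True by (simp add: mexp_def mpow_diagonal[OF assms] sums_iff)
qed (simp add: mexp_def mpow_diagonal[OF assms])

lemma inner_mexp_diagonal_ones:
  fixes A :: "real^'n^'n"
  assumes "\<And>i j. i \<noteq> j \<Longrightarrow> A$i$j = 0"
  shows "v \<bullet> (mexp A *v vec 1) = (\<Sum>i\<in>UNIV. v$i * exp (A$i$i))"
  by (simp add: mexp_diagonal[OF assms] inner_vec_def matrix_vector_mult_def)

lemma matrix_inv_left:
  fixes A :: "'a::semiring_1^'n^'m"
  assumes "invertible A"
  shows "matrix_inv A ** A = mat 1"
  using someI_ex[OF assms[unfolded invertible_def]] by (simp add: matrix_inv_def)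

lemma invertible_uminus:
  fixes A :: "'a::real_algebra_1^'n^'m"
  assumes "invertible A"
  shows "invertible (- A)"
  using scalar_invertible[OF _ assms, of "-1"] by simp

lemma MSPP_irreducible_D:
  assumes "is_MSPP C D"
  shows "irreducible_gen D"
proof -
  have "{(k, l). k \<noteq> l \<and> (C + D)$k$l > 0} = {(k, l). k \<noteq> l \<and> D$k$l > 0}"
    using assms by (auto simp: is_MSPP_def)
  then show ?thesis using assms by (simp add: is_MSPP_def is_MAP_def irreducible_gen_def)
qed

lemma MSPP_diag_neg:
  assumes "is_MSPP C D"
  shows "C$i$i < 0"
proof -
  have diag: "\<And>i j. i \<noteq> j \<Longrightarrow> C$i$j = 0" and D_nonneg: "\<And>i j. D$i$j \<ge> 0"
    and "invertible C" and "(\<Sum>j\<in>UNIV. (C + D)$i$j) = 0"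
    using assms by (auto simp: is_MSPP_def is_MAP_def is_generator_def)
  then have "C$i$i = - (\<Sum>j\<in>UNIV. D$i$j)" by (simp add: sum.distrib row_sum_diagonal)
  moreover have "(\<Sum>j\<in>UNIV. D$i$j) \<ge> 0" by (simp add: D_nonneg sum_nonneg)
  moreover have "C$i$i \<noteq> 0" using invertible_diagonal_nonzero[OF diag \<open>invertible C\<close>] .
  ultimately show ?thesis by linarith
qed

lemma MSPP_stationary_balance:
  assumes "is_MSPP C D" and "\<pi> v* (C + D) = 0"
  shows "(\<Sum>i\<in>UNIV. \<pi>$i * D$i$j) = \<pi>$j * - C$j$j"
proof -
  have "\<pi> v* D = - (\<pi> v* C)"
    using assms(2) by (simp add: vector_matrix_mult_add_rdistrib eq_neg_iff_add_eq_0 add.commute)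
  then show ?thesis
    using vector_matrix_mult_diagonal[of C \<pi> j] assms(1)
    by (simp add: is_MSPP_def vec_eq_iff vector_matrix_mult_def)
qed

lemma MSPP_event_rate_pos:
  assumes "is_MSPP C D" and "is_distribution \<pi>"
  shows "(\<Sum>j\<in>UNIV. \<pi>$j * - C$j$j) > 0"
proof -
  have \<pi>_nonneg: "\<And>i. \<pi>$i \<ge> 0" and \<pi>_sum: "sum (($) \<pi>) UNIV = 1"
    using assms(2) by (auto simp: is_distribution_def)
  obtain k where "\<pi>$k \<noteq> 0" using \<pi>_sum sum.neutral[of UNIV "($) \<pi>"] by force
  with \<pi>_nonneg have "\<pi>$k > 0" by (simp add: order_less_le)
  then show ?thesis
    using MSPP_diag_neg[OF assms(1)] \<pi>_nonneg
    by (intro sum_pos2[of _ k]) (auto intro: mult_pos_neg mult_nonneg_nonpos less_imp_le)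
qed

lemma MSPP_embedded_stationary:
  fixes C D :: "real^'n^'n" and \<pi> \<alpha> :: "real^'n"
  assumes MSPP: "is_MSPP C D"
    and "is_distribution \<pi>" and "\<pi> v* (C + D) = 0"
    and "is_distribution \<alpha>" and "\<alpha> v* (matrix_inv (- C) ** D) = \<alpha>"
  shows "\<alpha>$i = \<pi>$i * - C$i$i / (\<Sum>j\<in>UNIV. \<pi>$j * - C$j$j)"
proof -
  have diag: "\<And>i j. i \<noteq> j \<Longrightarrow> C$i$j = 0" and D_nonneg: "\<And>i j. D$i$j \<ge> 0"
    and "invertible C" using MSPP by (auto simp: is_MSPP_def is_MAP_def)
  have \<pi>_nonneg: "\<And>i. \<pi>$i \<ge> 0" and "sum (($) \<pi>) UNIV = 1"
    and \<alpha>_nonneg: "\<And>i. \<alpha>$i \<ge> 0" and \<alpha>_sum: "sum (($) \<alpha>) UNIV = 1"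
    using assms(2,4) by (auto simp: is_distribution_def)
  have rate_pos: "\<And>j. - C$j$j > 0" using MSPP_diag_neg[OF MSPP] by simp
  define \<beta> where "\<beta> = \<alpha> v* matrix_inv (- C)"
  have "\<beta> v* (- C) = \<alpha>"
    by (simp add: \<beta>_def vector_matrix_mul_assoc matrix_inv_left invertible_uminus \<open>invertible C\<close>)
  then have \<alpha>_\<beta>: "\<alpha>$j = \<beta>$j * - C$j$j" for j
    using vector_matrix_mult_diagonal[of "- C" \<beta> j] diag by (simp add: vec_eq_iff)
  have "\<beta> v* D = \<alpha>" using assms(5) by (simp add: \<beta>_def vector_matrix_mul_assoc)
  then have balance_\<beta>: "(\<Sum>i\<in>UNIV. \<beta>$i * D$i$j) = \<beta>$j * - C$j$j" for j
    by (simp add: vec_eq_iff vector_matrix_mult_def \<alpha>_\<beta>)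
  have \<beta>_nonneg: "\<beta>$i \<ge> 0" for i
    using \<alpha>_nonneg[of i] rate_pos[of i] \<alpha>_\<beta>[of i] by (simp add: mult_le_0_iff)
  have "\<alpha> \<noteq> 0" "\<pi> \<noteq> 0" using \<alpha>_sum \<open>sum (($) \<pi>) UNIV = 1\<close> by auto
  then have "\<beta> \<noteq> 0" using \<open>\<beta> v* (- C) = \<alpha>\<close> by auto
  then obtain c where "\<beta> = c *s \<pi>"
    using irreducible_balance_unique[OF D_nonneg MSPP_irreducible_D[OF MSPP] \<beta>_nonneg _ \<pi>_nonneg
        \<open>\<pi> \<noteq> 0\<close> balance_\<beta> MSPP_stationary_balance[OF MSPP assms(3)] rate_pos] by blast
  then have \<alpha>_c: "\<alpha>$i = c * (\<pi>$i * - C$i$i)" for i by (simp add: \<alpha>_\<beta>)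
  then have "c * (\<Sum>j\<in>UNIV. \<pi>$j * - C$j$j) = 1"
    using \<alpha>_sum by (simp add: sum_distrib_left)
  then have "c = 1 / (\<Sum>j\<in>UNIV. \<pi>$j * - C$j$j)"
    by (cases "(\<Sum>j\<in>UNIV. \<pi>$j * - C$j$j) = 0") (simp_all add: eq_divide_eq)
  then show ?thesis by (simp add: \<alpha>_c)
qed

theorem proposition3:
  fixes C D :: "real^'n^'n" and \<pi> \<alpha> :: "real^'n"
  assumes "is_MSPP C D"
    and "is_distribution \<pi>" and "\<pi> v* (C + D) = 0"
    and "is_distribution \<alpha>" and "\<alpha> v* (matrix_inv (- C) ** D) = \<alpha>"
  shows "\<forall>t::real. t \<ge> 0 \<longrightarrow>
           \<alpha> \<bullet> (mexp (t *\<^sub>R C) *v vec 1) \<le> \<pi> \<bullet> (mexp (t *\<^sub>R C) *v vec 1)"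
proof (intro allI impI)
  fix t :: real assume "t \<ge> 0"
  define r where "r i = - C$i$i" for i
  define S where "S = (\<Sum>i\<in>UNIV. \<pi>$i * r i)"
  have diag: "\<And>i j. i \<noteq> j \<Longrightarrow> (t *\<^sub>R C)$i$j = 0" using assms(1) by (simp add: is_MSPP_def)
  have "S > 0" using MSPP_event_rate_pos[OF assms(1,2)] by (simp add: S_def r_def)
  have Chebyshev: "(\<Sum>i\<in>UNIV. \<pi>$i * r i * exp (- t * r i)) \<le> S * (\<Sum>i\<in>UNIV. \<pi>$i * exp (- t * r i))"
    unfolding S_def using assms(2) \<open>t \<ge> 0\<close>
    by (intro weighted_Chebyshev_sum_upper) (auto simp: is_distribution_def mult_left_mono)
  have "\<alpha> \<bullet> (mexp (t *\<^sub>R C) *v vec 1) = (\<Sum>i\<in>UNIV. \<alpha>$i * exp ((t *\<^sub>R C)$i$i))"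
    by (rule inner_mexp_diagonal_ones[OF diag])
  also have "\<dots> = (\<Sum>i\<in>UNIV. \<pi>$i * r i * exp (- t * r i)) / S"
    by (simp add: MSPP_embedded_stationary[OF assms] S_def r_def sum_divide_distrib)
  also have "\<dots> \<le> (\<Sum>i\<in>UNIV. \<pi>$i * exp (- t * r i))"
    using Chebyshev \<open>S > 0\<close> by (simp add: divide_le_eq mult.commute)
  also have "\<dots> = (\<Sum>i\<in>UNIV. \<pi>$i * exp ((t *\<^sub>R C)$i$i))"
    by (simp add: r_def)
  also have "\<dots> = \<pi> \<bullet> (mexp (t *\<^sub>R C) *v vec 1)"
    by (rule inner_mexp_diagonal_ones[OF diag, symmetric])
  finally show "\<alpha> \<bullet> (mexp (t *\<^sub>R C) *v vec 1) \<le> \<pi> \<bullet> (mexp (t *\<^sub>R C) *v vec 1)" .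
qed

end
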